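(* Let $D\le E$ be subgroups of a group $G$ with $E$ normal in $G$, and assume that the sandwich classification theorem holds for $L(D,E)$. Suppose further: (1) $D$ is generated by a union of finitely generated perfect subgroups; (2) for every $D$-full subgroup $F\le E$, the quotient group $N_E(F)/F$ is quasi-solvable. Then the sandwich classification theorem holds for $L(D,G)$, and the set of $D$-full subgroups of $G$ coincides with the set of $D$-full subgroups of $E$.
   Context: A group is perfect if it equals its commutator subgroup. A group is quasi-solvable if it is the union of an ascending chain of solvable subgroups. $X^Y$ denotes the subgroup generated by all $b^{-1}ab$, $a\in X$, $b\in Y$. $L(D,G)$ is the lattice of subgroups of $G$ containing $D$; $F\in L(D,G)$ is $D$-full if $D^F=F$. The lattice $L(D,G)$ satisfies the sandwich classification theorem if for every $H\in L(D,G)$ the subgroup $D^H$ is $D$-full and $H\le N_G(D^H)$ (equivalently, $L(D,G)$ is the union of the sets $\{H: F\le H\le N_G(F)\}$ over $D$-full $F$). *)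

theory Defs
  imports "HOL-Algebra.Algebra"
begin

definition conj_gen :: "('a, 'b) monoid_scheme \<Rightarrow> 'a set \<Rightarrow> 'a set \<Rightarrow> 'a set" where
  "conj_gen G A B = generate G {inv\<^bsub>G\<^esub> y \<otimes>\<^bsub>G\<^esub> x \<otimes>\<^bsub>G\<^esub> y | x y. x \<in> A \<and> y \<in> B}"

definition sub_lattice :: "('a, 'b) monoid_scheme \<Rightarrow> 'a set \<Rightarrow> 'a set \<Rightarrow> 'a set set" where
  "sub_lattice G D H = {K. subgroup K G \<and> D \<subseteq> K \<and> K \<subseteq> H}"

definition D_full :: "('a, 'b) monoid_scheme \<Rightarrow> 'a set \<Rightarrow> 'a set \<Rightarrow> 'a set \<Rightarrow> bool" where
  "D_full G D H F \<longleftrightarrow> F \<in> sub_lattice G D H \<and> conj_gen G D F = F"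

definition normaliser_in :: "('a, 'b) monoid_scheme \<Rightarrow> 'a set \<Rightarrow> 'a set \<Rightarrow> 'a set" where
  "normaliser_in G H F = {h \<in> H \<inter> carrier G. h <#\<^bsub>G\<^esub> F #>\<^bsub>G\<^esub> inv\<^bsub>G\<^esub> h = F}"

definition sandwich_classification :: "('a, 'b) monoid_scheme \<Rightarrow> 'a set \<Rightarrow> 'a set \<Rightarrow> bool" where
  "sandwich_classification G D H \<longleftrightarrow>
     (\<forall>K \<in> sub_lattice G D H. D_full G D H (conj_gen G D K) \<and> K \<subseteq> normaliser_in G H (conj_gen G D K))"

definition perfect_subgroup :: "('a, 'b) monoid_scheme \<Rightarrow> 'a set \<Rightarrow> bool" where
  "perfect_subgroup G P \<longleftrightarrow> subgroup P G \<and> derived G P = P"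

definition fin_gen_subgroup :: "('a, 'b) monoid_scheme \<Rightarrow> 'a set \<Rightarrow> bool" where
  "fin_gen_subgroup G P \<longleftrightarrow> subgroup P G \<and> (\<exists>S. finite S \<and> S \<subseteq> P \<and> generate G S = P)"

definition quasi_solvable :: "('a, 'b) monoid_scheme \<Rightarrow> bool" where
  "quasi_solvable Q \<longleftrightarrow> (\<exists>C. C \<noteq> {} \<and> Ball C (\<lambda>S. subgroup S Q \<and> solvable (Q\<lparr>carrier := S\<rparr>))
        \<and> (\<forall>S\<in>C. \<forall>T\<in>C. S \<subseteq> T \<or> T \<subseteq> S) \<and> \<Union>C = carrier Q)"

end

theory Submission
  imports Defs
begin

(* Given D \<le> H \<le> G, put K = H \<inter> E and F = D^K; by hypothesis F is D-full in E and K normalises F.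
   For h \<in> H, conjugation by h maps every finitely generated perfect generator P of D into
   K \<le> N_E(F), so it induces a homomorphism from P to N_E(F)/F. A finitely generated subgroup of a
   quasi-solvable group lies in one solvable member of the chain, and a perfect group has trivial
   image in a solvable group; hence h D h\<inverse> \<le> F. Since h also normalises K, it normalises
   F = D^K, and then D^H = F. Finally every D-full subgroup of G lies in E because E is normal. *)

lemma (in group) inv_mult_cancel_left [simp]:
  "x \<in> carrier G \<Longrightarrow> y \<in> carrier G \<Longrightarrow> inv x \<otimes> (x \<otimes> y) = y"
  by (simp add: m_assoc[symmetric])

lemma (in group) mult_inv_cancel_left [simp]:
  "x \<in> carrier G \<Longrightarrow> y \<in> carrier G \<Longrightarrow> x \<otimes> (inv x \<otimes> y) = y"
  by (simp add: m_assoc[symmetric])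

lemma (in group) solvable_seq_of_solvable_subgroup:
  assumes "subgroup T G" "solvable (G\<lparr>carrier := T\<rparr>)" "subgroup K G" "K \<subseteq> T"
  shows "solvable_seq G K"
proof -
  interpret T: group "G\<lparr>carrier := T\<rparr>" using subgroup_imp_group[OF assms(1)] .
  have "solvable_seq (G\<lparr>carrier := T\<rparr>) K"
    using T.solvable_subgroup[OF subgroup_incl[OF assms(3,1,4)] assms(2)] .
  then show ?thesis
    using group_hom.solvable_imp_solvable_img[OF canonical_inj_is_hom[OF assms(1)]] by simp
qed

lemma (in group) quasi_solvable_imp_solvable_generate:
  assumes "quasi_solvable G" "finite S" "S \<subseteq> carrier G"
  shows "solvable_seq G (generate G S)"
proof -
  obtain C where C: "C \<noteq> {}" "\<forall>T\<in>C. subgroup T G \<and> solvable (G\<lparr>carrier := T\<rparr>)"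
    "\<forall>T\<in>C. \<forall>T'\<in>C. T \<subseteq> T' \<or> T' \<subseteq> T" "\<Union>C = carrier G"
    using assms(1) unfolding quasi_solvable_def by (elim exE conjE) (rule that)
  have "subset.chain C C"
    using C(3) by (simp add: subset_chain_def)
  then obtain T where T: "T \<in> C" "S \<subseteq> T"
    using finite_subset_Union_chain[of S C C] assms(2,3) C(1,4) by blast
  have "generate G S \<subseteq> T"
    using generate_subgroup_incl[OF T(2)] C(2) T(1) by blast
  then show ?thesis
    using solvable_seq_of_solvable_subgroup[of T] generate_is_subgroup[OF assms(3)] C(2) T(1)
    by blast
qed

lemma (in group_hom) perfect_img_trivial_if_solvable:
  assumes "subgroup P G" "derived G P = P" "solvable_seq H (h ` P)"
  shows "h ` P = {\<one>\<^bsub>H\<^esub>}"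
proof -
  obtain n where "(derived H ^^ n) (h ` P) = {\<one>\<^bsub>H\<^esub>}"
    using H.solvable_imp_trivial_derived_seq[OF assms(3)] by blast
  moreover have "(derived G ^^ n) P = P"
    by (induction n) (simp_all add: assms(2))
  ultimately show ?thesis
    using exp_of_derived_img[OF subgroup.subset[OF assms(1)], of n] by simp
qed

lemma hom_perfect_fin_gen_to_quasi_solvable_trivial:
  assumes "group G" "group H" "quasi_solvable H"
    and "perfect_subgroup G P" "fin_gen_subgroup G P"
    and "f \<in> hom (G\<lparr>carrier := P\<rparr>) H"
  shows "f ` P = {\<one>\<^bsub>H\<^esub>}"
proof -
  interpret G: group G by fact
  interpret H: group H by fact
  have P: "subgroup P G" "derived G P = P"
    using assms(4) by (auto simp: perfect_subgroup_def)
  obtain S where S: "finite S" "S \<subseteq> P" "generate G S = P"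
    using assms(5) unfolding fin_gen_subgroup_def by blast
  interpret f: group_hom "G\<lparr>carrier := P\<rparr>" H f
    using G.subgroup_imp_group[OF P(1)] assms(2,6) by (simp add: group_hom_def group_hom_axioms_def)
  have "f ` P = generate H (f ` S)"
    using f.generate_img[of S] S(2,3) G.generate_consistent[OF S(2) P(1)] by simp
  moreover have "f ` S \<subseteq> carrier H"
    using S(2) f.hom_closed by auto
  ultimately have "solvable_seq H (f ` P)"
    using H.quasi_solvable_imp_solvable_generate[OF assms(3)] S(1) by simp
  moreover have "subgroup P (G\<lparr>carrier := P\<rparr>)"
    using f.G.subgroup_self by simp
  moreover have "derived (G\<lparr>carrier := P\<rparr>) P = P"
    using G.derived_consistent[OF order_refl P(1)] P(2) by simp
  ultimately show ?thesis
    using f.perfect_img_trivial_if_solvable by blast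
qed

lemma hom_perfect_fin_gen_into_quasi_solvable_quotient:
  assumes "group G" "perfect_subgroup G P" "fin_gen_subgroup G P"
    and "f \<in> hom (G\<lparr>carrier := P\<rparr>) M" "F \<lhd> M" "quasi_solvable (M Mod F)"
  shows "f ` P \<subseteq> F"
proof
  interpret F: normal F M by fact
  fix y assume "y \<in> f ` P"
  then obtain x where x: "x \<in> P" "y = f x" by blast
  have "(\<lambda>x. F #>\<^bsub>M\<^esub> f x) \<in> hom (G\<lparr>carrier := P\<rparr>) (M Mod F)"
    using hom_compose[OF assms(4) F.r_coset_hom_Mod] by (simp add: comp_def)
  then have "F #>\<^bsub>M\<^esub> f x = F"
    using hom_perfect_fin_gen_to_quasi_solvable_trivial[OF assms(1) F.factorgroup_is_group assms(6,2,3)] x(1)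
    by (auto simp: FactGroup_def)
  moreover have "f x \<in> F #>\<^bsub>M\<^esub> f x"
    using F.rcos_self[OF _ F.subgroup_axioms] assms(4) x(1) by (auto simp: hom_def)
  ultimately show "y \<in> F" using x(2) by simp
qed

lemma normaliser_in_eq_normalizer:
  assumes "F \<subseteq> carrier G"
  shows "normaliser_in G H F = H \<inter> normalizer G F"
  using assms unfolding normaliser_in_def normalizer_def stabilizer_def by auto

lemma (in group) subgroup_normaliser_in:
  assumes "subgroup H G" "F \<subseteq> carrier G"
  shows "subgroup (normaliser_in G H F) G"
  using subgroups_Inter_pair[OF assms(1) normalizer_imp_subgroup[OF assms(2)]]
  by (simp add: normaliser_in_eq_normalizer[OF assms(2)])

lemma (in group) normaliser_in_conj_closed:
  assumes "n \<in> normaliser_in G H F" "x \<in> F"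
  shows "n \<otimes> x \<otimes> inv n \<in> F"
proof -
  have "n \<otimes> x \<otimes> inv n \<in> n <# F #> inv n"
    using assms(2) unfolding l_coset_def r_coset_def by blast
  then show ?thesis
    using assms(1) unfolding normaliser_in_def by simp
qed

lemma (in group) subgroup_subset_normaliser_in:
  assumes "subgroup K G" "K \<subseteq> H" "F \<subseteq> carrier G"
    and conj: "\<And>k x. k \<in> K \<Longrightarrow> x \<in> F \<Longrightarrow> k \<otimes> x \<otimes> inv k \<in> F"
  shows "K \<subseteq> normaliser_in G H F"
proof
  fix k assume k: "k \<in> K"
  have kG: "k \<in> carrier G"
    using subgroup.subset[OF assms(1)] k by blast
  have "k <# F #> inv k = (\<lambda>x. k \<otimes> x \<otimes> inv k) ` F"
    unfolding l_coset_def r_coset_def by auto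
  also have "\<dots> = F"
  proof
    show "(\<lambda>x. k \<otimes> x \<otimes> inv k) ` F \<subseteq> F"
      using conj k by blast
    show "F \<subseteq> (\<lambda>x. k \<otimes> x \<otimes> inv k) ` F"
    proof
      fix x assume x: "x \<in> F"
      then have "x = k \<otimes> (inv k \<otimes> x \<otimes> inv (inv k)) \<otimes> inv k"
        using kG assms(3) by (auto simp: m_assoc)
      moreover have "inv k \<otimes> x \<otimes> inv (inv k) \<in> F"
        using conj[OF subgroup.m_inv_closed[OF assms(1) k] x] .
      ultimately show "x \<in> (\<lambda>x. k \<otimes> x \<otimes> inv k) ` F"
        by (rule image_eqI)
    qed
  qed
  finally show "k \<in> normaliser_in G H F"
    using k kG assms(2) unfolding normaliser_in_def by blast
qed

lemma (in group) normal_in_normaliser_in: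
  assumes "subgroup H G" "subgroup F G" "F \<subseteq> H"
  shows "F \<lhd> G\<lparr>carrier := normaliser_in G H F\<rparr>"
proof -
  let ?N = "normaliser_in G H F"
  have sN: "subgroup ?N G"
    using subgroup_normaliser_in[OF assms(1) subgroup.subset[OF assms(2)]] .
  have "F \<subseteq> ?N"
    using subgroup_subset_normaliser_in[OF assms(2,3) subgroup.subset[OF assms(2)]]
    by (simp add: subgroup.m_closed subgroup.m_inv_closed assms(2))
  then show ?thesis
    using group.normal_invI[OF subgroup_imp_group[OF sN] subgroup_incl[OF assms(2) sN]]
          normaliser_in_conj_closed m_inv_consistent[OF sN]
    by simp
qed

lemma (in group) conj_hom:
  assumes "g \<in> carrier G"
  shows "(\<lambda>x. g \<otimes> x \<otimes> inv g) \<in> hom G G"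
  using assms unfolding hom_def by (auto simp: m_assoc)

lemma (in group) conj_generate_subset:
  assumes "S \<subseteq> carrier G" "g \<in> carrier G" "subgroup F G" "(\<lambda>x. g \<otimes> x \<otimes> inv g) ` S \<subseteq> F"
  shows "(\<lambda>x. g \<otimes> x \<otimes> inv g) ` generate G S \<subseteq> F"
proof -
  interpret c: group_hom G G "\<lambda>x. g \<otimes> x \<otimes> inv g"
    using conj_hom[OF assms(2)] by (simp add: group_hom_def group_hom_axioms_def is_group)
  show ?thesis
    using c.generate_img[OF assms(1)] generate_subgroup_incl[OF assms(4,3)] by simp
qed

lemma (in group) conj_gen_subset:
  assumes "subgroup F G" "\<And>d h. d \<in> D \<Longrightarrow> h \<in> H \<Longrightarrow> inv h \<otimes> d \<otimes> h \<in> F"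
  shows "conj_gen G D H \<subseteq> F"
  unfolding conj_gen_def using assms by (intro generate_subgroup_incl) auto

lemma (in group) conj_gen_mono:
  assumes "H \<subseteq> K"
  shows "conj_gen G D H \<subseteq> conj_gen G D K"
  unfolding conj_gen_def using assms by (intro mono_generate) blast

lemma (in group) conj_gen_subset_normal:
  assumes "E \<lhd> G" "D \<subseteq> E" "H \<subseteq> carrier G"
  shows "conj_gen G D H \<subseteq> E"
  using normal.inv_op_closed1[OF assms(1)] assms(2,3)
  by (intro conj_gen_subset normal_imp_subgroup[OF assms(1)]) blast

lemma (in group) conj_generate_perfect_subgroups_subset:
  assumes PP: "\<forall>P\<in>PP. perfect_subgroup G P \<and> fin_gen_subgroup G P"
    and N: "subgroup N G" "subgroup F G" "F \<lhd> G\<lparr>carrier := N\<rparr>"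
      "quasi_solvable (G\<lparr>carrier := N\<rparr> Mod F)"
    and g: "g \<in> carrier G" "(\<lambda>x. g \<otimes> x \<otimes> inv g) ` \<Union>PP \<subseteq> N"
  shows "(\<lambda>x. g \<otimes> x \<otimes> inv g) ` generate G (\<Union>PP) \<subseteq> F"
proof (rule conj_generate_subset[OF _ g(1) N(2)])
  show "\<Union>PP \<subseteq> carrier G"
    using PP by (auto simp: perfect_subgroup_def dest: subgroup.subset)
  show "(\<lambda>x. g \<otimes> x \<otimes> inv g) ` \<Union>PP \<subseteq> F"
  proof (rule image_subsetI)
    fix x assume "x \<in> \<Union>PP"
    then obtain P where P: "P \<in> PP" "x \<in> P" by blast
    have PG: "P \<subseteq> carrier G"
      using PP P(1) by (auto simp: perfect_subgroup_def dest: subgroup.subset)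
    have "(\<lambda>x. g \<otimes> x \<otimes> inv g) \<in> hom (G\<lparr>carrier := P\<rparr>) (G\<lparr>carrier := N\<rparr>)"
      using conj_hom[OF g(1)] g(2) P(1) PG unfolding hom_def by (auto simp: Pi_iff subset_iff)
    then have "(\<lambda>x. g \<otimes> x \<otimes> inv g) ` P \<subseteq> F"
      using hom_perfect_fin_gen_into_quasi_solvable_quotient[OF is_group _ _ _ N(3,4)] PP P(1)
      by blast
    then show "g \<otimes> x \<otimes> inv g \<in> F" using P(2) by blast
  qed
qed

lemma (in group) conj_gen_conj_closed:
  assumes "D \<subseteq> carrier G" "subgroup K G" "g \<in> carrier G"
    and KN: "K \<subseteq> normaliser_in G H (conj_gen G D K)"
    and gD: "(\<lambda>x. g \<otimes> x \<otimes> inv g) ` D \<subseteq> conj_gen G D K"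
    and gK: "(\<lambda>x. g \<otimes> x \<otimes> inv g) ` K \<subseteq> K"
  shows "(\<lambda>x. g \<otimes> x \<otimes> inv g) ` conj_gen G D K \<subseteq> conj_gen G D K"
proof -
  let ?S = "{inv k \<otimes> d \<otimes> k | d k. d \<in> D \<and> k \<in> K}"
  have KG: "K \<subseteq> carrier G" using subgroup.subset[OF assms(2)] .
  have SG: "?S \<subseteq> carrier G" using assms(1) KG by fastforce
  have "g \<otimes> (inv k \<otimes> d \<otimes> k) \<otimes> inv g \<in> conj_gen G D K" if "d \<in> D" "k \<in> K" for d k
  proof -
    define n where "n = g \<otimes> inv k \<otimes> inv g"
    have "n \<in> K"
      using gK subgroup.m_inv_closed[OF assms(2) that(2)] unfolding n_def by blast
    then have "n \<otimes> (g \<otimes> d \<otimes> inv g) \<otimes> inv n \<in> conj_gen G D K"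
      using normaliser_in_conj_closed KN gD that(1) by blast
    moreover have "n \<otimes> (g \<otimes> d \<otimes> inv g) \<otimes> inv n = g \<otimes> (inv k \<otimes> d \<otimes> k) \<otimes> inv g"
    proof -
      have "d \<in> carrier G" "k \<in> carrier G" using assms(1) KG that by auto
      then show ?thesis using assms(3) unfolding n_def by (simp add: inv_mult_group m_assoc)
    qed
    ultimately show ?thesis by simp
  qed
  then show ?thesis
    unfolding conj_gen_def
    using conj_generate_subset[OF SG assms(3) generate_is_subgroup[OF SG]] by blast
qed

lemma (in group) D_full_conj_gen_normalised:
  assumes "E \<lhd> G" "D \<subseteq> E"
    and sandwich: "sandwich_classification G D E"
    and PP: "\<forall>P\<in>PP. perfect_subgroup G P \<and> fin_gen_subgroup G P" "D = generate G (\<Union>PP)"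
    and qs: "\<And>F. D_full G D E F \<Longrightarrow> quasi_solvable (G\<lparr>carrier := normaliser_in G E F\<rparr> Mod F)"
    and H: "H \<in> sub_lattice G D (carrier G)"
  shows "D_full G D E (conj_gen G D H) \<and> H \<subseteq> normaliser_in G (carrier G) (conj_gen G D H)"
proof -
  define K where "K = H \<inter> E"
  define F where "F = conj_gen G D K"
  define N where "N = normaliser_in G E F"
  have sH: "subgroup H G" "D \<subseteq> H" and sE: "subgroup E G"
    using H assms(1) unfolding sub_lattice_def by (auto dest: normal_imp_subgroup)
  have HG: "H \<subseteq> carrier G" using subgroup.subset[OF sH(1)] .
  have sK: "subgroup K G"
    unfolding K_def using subgroups_Inter_pair[OF sH(1) sE] .
  have DK: "D \<subseteq> K"
    using sH(2) assms(2) unfolding K_def by blast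
  have "K \<in> sub_lattice G D E"
    using sK DK unfolding sub_lattice_def K_def by blast
  then have FD: "D_full G D E F" and KN: "K \<subseteq> N"
    using sandwich unfolding sandwich_classification_def F_def N_def by blast+
  then have sF: "subgroup F G" "F \<subseteq> E"
    unfolding D_full_def sub_lattice_def by auto
  have sN: "subgroup N G"
    unfolding N_def using subgroup_normaliser_in[OF sE subgroup.subset[OF sF(1)]] .
  have nF: "F \<lhd> G\<lparr>carrier := N\<rparr>"
    unfolding N_def using normal_in_normaliser_in[OF sE sF] .
  have HK: "(\<lambda>x. h \<otimes> x \<otimes> inv h) ` K \<subseteq> K" if h: "h \<in> H" for h
  proof (rule image_subsetI)
    fix k assume k: "k \<in> K"
    have "h \<otimes> k \<otimes> inv h \<in> H"
      using h k sH(1) by (simp add: K_def subgroup.m_closed subgroup.m_inv_closed)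
    moreover have "h \<otimes> k \<otimes> inv h \<in> E"
      using h k HG normal.inv_op_closed2[OF assms(1)] unfolding K_def by blast
    ultimately show "h \<otimes> k \<otimes> inv h \<in> K" unfolding K_def by blast
  qed
  have HD: "(\<lambda>x. h \<otimes> x \<otimes> inv h) ` D \<subseteq> F" if h: "h \<in> H" for h
  proof -
    have "\<Union>PP \<subseteq> D"
      unfolding PP(2) by (blast intro: generate.incl)
    then have "(\<lambda>x. h \<otimes> x \<otimes> inv h) ` \<Union>PP \<subseteq> N"
      using HK[OF h] DK KN by blast
    then show ?thesis
      unfolding PP(2)
      using conj_generate_perfect_subgroups_subset[OF PP(1) sN sF(1) nF qs[OF FD, folded N_def]] h HG by blast
  qed
  have "H \<subseteq> normaliser_in G (carrier G) F"
  proof (rule subgroup_subset_normaliser_in[OF sH(1) HG subgroup.subset[OF sF(1)]])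
    fix h x assume "h \<in> H" "x \<in> F"
    moreover have "D \<subseteq> carrier G"
      using DK subgroup.subset[OF sK] by blast
    ultimately show "h \<otimes> x \<otimes> inv h \<in> F"
      using conj_gen_conj_closed[OF _ sK _ KN[unfolded N_def F_def] HD[unfolded F_def] HK] HG
      unfolding F_def by blast
  qed
  moreover have "conj_gen G D H = F"
  proof
    have "inv h \<otimes> d \<otimes> h \<in> F" if "d \<in> D" "h \<in> H" for d h
    proof -
      have "inv h \<otimes> d \<otimes> inv (inv h) \<in> F"
        using HD[OF subgroup.m_inv_closed[OF sH(1) \<open>h \<in> H\<close>]] \<open>d \<in> D\<close> by blast
      then show ?thesis using HG \<open>h \<in> H\<close> by auto
    qed
    then show "conj_gen G D H \<subseteq> F"
      by (rule conj_gen_subset[OF sF(1)])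
    show "F \<subseteq> conj_gen G D H"
      unfolding F_def K_def by (rule conj_gen_mono) blast
  qed
  ultimately show ?thesis using FD by simp
qed

theorem lemma2p5:
  fixes G :: "('a, 'b) monoid_scheme" and D E :: "'a set"
  assumes "group G"
    and "subgroup D G" and "D \<subseteq> E" and "E \<lhd> G"
    and "sandwich_classification G D E"
    and "\<exists>\<P>. (\<forall>P\<in>\<P>. perfect_subgroup G P \<and> fin_gen_subgroup G P) \<and> D = generate G (\<Union>\<P>)"
    and "\<And>F. D_full G D E F \<Longrightarrow>
           quasi_solvable ((G\<lparr>carrier := normaliser_in G E F\<rparr>) Mod F)"
  shows "sandwich_classification G D (carrier G)
         \<and> {F. D_full G D (carrier G) F} = {F. D_full G D E F}"
proof -
  interpret group G by fact
  obtain PP where PP: "\<forall>P\<in>PP. perfect_subgroup G P \<and> fin_gen_subgroup G P" "D = generate G (\<Union>PP)"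
    using assms(6) by blast
  have EG: "E \<subseteq> carrier G"
    using subgroup.subset[OF normal_imp_subgroup[OF assms(4)]] .
  have full_iff: "D_full G D (carrier G) F \<longleftrightarrow> D_full G D E F" for F
    using conj_gen_subset_normal[OF assms(4,3), of F] EG unfolding D_full_def sub_lattice_def by auto
  have "sandwich_classification G D (carrier G)"
    using D_full_conj_gen_normalised[OF assms(4,3,5) PP assms(7)] full_iff
    unfolding sandwich_classification_def by blast
  then show ?thesis using full_iff by simp
qed

end
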